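(* Let $g:M^{3\times3}\times M^{3\times3}\times[0,\infty)\to(-\infty,\infty]$ be convex, real-valued on $M^{3\times3}\times M^{3\times3}\times(0,\infty)$, and satisfy $g(RA,RH,\delta)=g(A,H,\delta)$ for all $R\in SO(3)$, $A,H\in M^{3\times3}$, $\delta\ge0$. Suppose $\psi(A):=g(A,\operatorname{cof}A,\det A)$, $A\in M^{3\times3}_+$, satisfies $\psi(A_j)\to\infty$ for every sequence $A_j\in M^{3\times3}_+$ with $\det A_j\to0+$. Then the set $\{(A,H)\in M^{3\times3}\times M^{3\times3}: g(A,H,0)<\infty\}$ has empty interior.
   Context: $M^{3\times3}$ is the space of real $3\times3$ matrices, $M^{3\times3}_+=\{A:\det A>0\}$, $\operatorname{cof}A$ is the cofactor matrix of $A$, $SO(3)$ is the rotation group. *)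

theory Defs
  imports "HOL-Analysis.Analysis"
begin

text \<open>Cofactor matrix: entry (i,j) is the determinant of A with row i and column j
  replaced by the unit vectors, i.e. (-1)^(i+j) times the (i,j) minor.\<close>
definition cof :: "real^'n^'n \<Rightarrow> real^'n^'n" where
  "cof A = (\<chi> i j. det (\<chi> k l. if k = i \<and> l = j then 1
                                 else if k = i \<or> l = j then 0 else A $ k $ l))"

definition convex_ereal_on :: "'a::real_vector set \<Rightarrow> ('a \<Rightarrow> ereal) \<Rightarrow> bool" where
  "convex_ereal_on S f \<longleftrightarrow> convex S \<and> (\<forall>x\<in>S. f x \<noteq> -\<infinity>) \<and>
     (\<forall>x\<in>S. \<forall>y\<in>S. \<forall>t::real. 0 < t \<and> t < 1 \<longrightarrow>
        f ((1 - t) *\<^sub>R x + t *\<^sub>R y) \<le> ereal (1 - t) * f x + ereal t * f y)"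

end

theory Submission
  imports Defs
begin

text \<open>The set \<open>U = {(A, H). g (A, H, 0) < \<infinity>}\<close> is convex and invariant under
  \<open>(A, H) \<mapsto> (R A, R H)\<close> for \<open>R \<in> SO(3)\<close>. Averaging an interior point with its image under the
  half-turn \<open>diag(1,-1,-1)\<close>, and then the result with its image under \<open>diag(-1,1,-1)\<close>, keeps it
  in the interior; since the four rotations involved sum to zero, the result is \<open>0\<close>. Hence
  \<open>(D, cof D) \<in> U\<close> for \<open>D = diag(s,s,0)\<close> and some \<open>s > 0\<close>. Along \<open>A\<^sub>t = diag(s,s,t)\<close> the triple
  \<open>(A\<^sub>t, cof A\<^sub>t, det A\<^sub>t)\<close> is affine in \<open>t\<close>, so convexity bounds \<open>\<psi>(A\<^sub>t)\<close> for \<open>0 < t < 1\<close> by its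
  finite values at \<open>t = 0\<close> and \<open>t = 1\<close>, whereas \<open>det A\<^sub>t = s\<^sup>2 t \<rightarrow> 0\<close> forces \<open>\<psi>(A\<^sub>t) \<rightarrow> \<infinity>\<close>.\<close>

lemma convex_ereal_on_le_max:
  assumes "convex_ereal_on S f" "x \<in> S" "y \<in> S" "0 < t" "t < 1"
  shows "f ((1 - t) *\<^sub>R x + t *\<^sub>R y) \<le> max (f x) (f y)"
proof (cases "f x = \<infinity> \<or> f y = \<infinity>")
  case True
  then show ?thesis by auto
next
  case False
  with assms obtain u v where u: "f x = ereal u" and v: "f y = ereal v"
    unfolding convex_ereal_on_def by (metis ereal_cases)
  have "f ((1 - t) *\<^sub>R x + t *\<^sub>R y) \<le> ereal (1 - t) * f x + ereal t * f y"
    using assms unfolding convex_ereal_on_def by blast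
  also have "\<dots> = ereal ((1 - t) * u + t * v)"
    by (simp add: u v)
  also have "(1 - t) * u + t * v \<le> max u v"
    using assms(4,5) by (intro convex_bound_le) auto
  finally show ?thesis by (simp add: u v)
qed

lemma convex_ereal_on_finite_domain:
  assumes "convex_ereal_on S f"
  shows "convex {x \<in> S. f x < \<infinity>}"
proof (rule convexI)
  fix x y and u v :: real
  assume x: "x \<in> {x \<in> S. f x < \<infinity>}" and y: "y \<in> {x \<in> S. f x < \<infinity>}"
    and uv: "0 \<le> u" "0 \<le> v" "u + v = 1"
  have "convex S" using assms unfolding convex_ereal_on_def by blast
  then have "u *\<^sub>R x + v *\<^sub>R y \<in> S" using x y uv by (auto dest: convexD)
  moreover have "f (u *\<^sub>R x + v *\<^sub>R y) < \<infinity>"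
  proof (cases "u = 0 \<or> v = 0")
    case True
    then show ?thesis using x y uv by auto
  next
    case False
    then have "f ((1 - v) *\<^sub>R x + v *\<^sub>R y) \<le> max (f x) (f y)"
      using uv x y by (intro convex_ereal_on_le_max[OF assms]) auto
    also have "\<dots> < \<infinity>"
      using x y by (simp add: max_def)
    finally show ?thesis
      using uv by (simp add: eq_diff_eq[symmetric])
  qed
  ultimately show "u *\<^sub>R x + v *\<^sub>R y \<in> {x \<in> S. f x < \<infinity>}" by simp
qed

lemma convex_ereal_on_finite_zero_slice:
  fixes g :: "'a::real_vector \<times> 'b::real_vector \<times> real \<Rightarrow> ereal"
  assumes "convex_ereal_on (UNIV \<times> UNIV \<times> {0..}) g"
  shows "convex {(A, H). g (A, H, 0) < \<infinity>}"
proof -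
  have "{(A, H). g (A, H, 0) < \<infinity>} =
        (\<lambda>(A, H). (A, H, 0)) -` {x \<in> UNIV \<times> UNIV \<times> {0..}. g x < \<infinity>}"
    by auto
  moreover have "linear (\<lambda>(A :: 'a, H :: 'b). (A, H, 0 :: real))"
    by (auto simp: linear_iff)
  ultimately show ?thesis
    using convex_linear_vimage[OF _ convex_ereal_on_finite_domain[OF assms]] by simp
qed

lemma midpoint_in_interior_of_invariant_convex:
  fixes U :: "'a::euclidean_space set"
  assumes "convex U" "linear T" "\<And>x. T (T x) = x" "T ` U \<subseteq> U" "x \<in> interior U"
  shows "midpoint x (T x) \<in> interior U"
proof -
  have "inj T" by (metis assms(3) injI)
  have "T ` U = U" using assms(3,4) by (metis image_subset_iff subsetI subset_antisym rev_image_eqI)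
  then have "T x \<in> interior U"
    using assms(5) interior_injective_linear_image[OF assms(2) \<open>inj T\<close>, of U] by auto
  then show ?thesis
    using assms(5) convex_interior[OF assms(1)] unfolding midpoint_def
    by (simp add: convexD scaleR_right_distrib)
qed

definition diag3 :: "real \<Rightarrow> real \<Rightarrow> real \<Rightarrow> real^3^3" where
  "diag3 a b c = (\<chi> i j. if i \<noteq> j then 0 else if i = 1 then a else if i = 2 then b else c)"

lemma det_diag3: "det (diag3 a b c) = a * b * c"
  unfolding diag3_def by (simp add: det_3)

lemma cof_diag3: "cof (diag3 a b c) = diag3 (b * c) (a * c) (a * b)"
  unfolding diag3_def cof_def by (simp add: vec_eq_iff forall_3 det_3)

lemma diag3_mult: "diag3 a b c ** diag3 a' b' c' = diag3 (a * a') (b * b') (c * c')"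
  unfolding diag3_def by (simp add: vec_eq_iff matrix_matrix_mult_def forall_3 sum_3)

lemma diag3_scaleR: "r *\<^sub>R diag3 a b c = diag3 (r * a) (r * b) (r * c)"
  unfolding diag3_def by (simp add: vec_eq_iff forall_3)

lemma diag3_add: "diag3 a b c + diag3 a' b' c' = diag3 (a + a') (b + b') (c + c')"
  unfolding diag3_def by (simp add: vec_eq_iff forall_3)

lemma diag3_one: "diag3 1 1 1 = mat 1"
  unfolding diag3_def by (simp add: vec_eq_iff forall_3 mat_def)

lemma diag3_zero: "diag3 0 0 0 = 0"
  unfolding diag3_def by (simp add: vec_eq_iff forall_3)

lemma midpoint_diag3_mult:
  "midpoint A (diag3 a b c ** A) = diag3 ((1 + a) / 2) ((1 + b) / 2) ((1 + c) / 2) ** A"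
  unfolding diag3_def midpoint_def
  by (simp add: vec_eq_iff forall_3 matrix_matrix_mult_def sum_3 field_simps)

lemma rotation_matrix_diag3:
  assumes "a * a = 1" "b * b = 1" "c * c = 1" "a * b * c = 1"
  shows "rotation_matrix (diag3 a b c)"
  using assms unfolding rotation_matrix_def orthogonal_matrix diag3_def
  by (simp add: vec_eq_iff forall_3 matrix_matrix_mult_def sum_3 transpose_def mat_def det_3)

lemma diag3_minors_affine:
  "(diag3 a b t, cof (diag3 a b t), det (diag3 a b t)) =
     (1 - t) *\<^sub>R (diag3 a b 0, cof (diag3 a b 0), 0) + t *\<^sub>R (diag3 a b 1, cof (diag3 a b 1), a * b)"
  by (simp add: cof_diag3 det_diag3 diag3_scaleR diag3_add algebra_simps)

lemma convex_ereal_on_diag3_segment_le_max: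
  fixes g :: "(real^3^3) \<times> (real^3^3) \<times> real \<Rightarrow> ereal"
  assumes "convex_ereal_on (UNIV \<times> UNIV \<times> {0..}) g" "a * b \<ge> 0" "0 < t" "t < 1"
  shows "g (diag3 a b t, cof (diag3 a b t), det (diag3 a b t)) \<le>
           max (g (diag3 a b 0, cof (diag3 a b 0), 0)) (g (diag3 a b 1, cof (diag3 a b 1), a * b))"
  unfolding diag3_minors_affine[of a b t]
  using assms(2) by (intro convex_ereal_on_le_max[OF assms(1) _ _ assms(3,4)]) auto

lemma midpoint_Pair: "midpoint (a, b) (c, d) = (midpoint a c, midpoint b d)"
  by (simp add: midpoint_def)

lemma linear_left_mult_pair:
  fixes R :: "real^'n^'m"
  shows "linear (\<lambda>(A :: real^'k^'n, H :: real^'l^'n). (R ** A, R ** H))"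
  by (auto simp: linear_iff matrix_add_ldistrib matrix_scalar_ac scalar_matrix_assoc)

lemma zero_in_interior_of_rotation_invariant:
  fixes U :: "((real^3^3) \<times> (real^3^3)) set"
  assumes "convex U"
    and invariant: "\<And>R A H. rotation_matrix R \<Longrightarrow> (A, H) \<in> U \<Longrightarrow> (R ** A, R ** H) \<in> U"
    and "(A, H) \<in> interior U"
  shows "0 \<in> interior U"
proof -
  have halve: "(diag3 ((1 + a) / 2) ((1 + b) / 2) ((1 + c) / 2) ** A,
                diag3 ((1 + a) / 2) ((1 + b) / 2) ((1 + c) / 2) ** H) \<in> interior U"
    if "(A, H) \<in> interior U" "a * a = 1" "b * b = 1" "c * c = 1" "a * b * c = 1" for A H a b c
  proof -
    let ?R = "diag3 a b c"
    have involution: "?R ** (?R ** X) = X" for X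
      using that by (simp add: matrix_mul_assoc diag3_mult diag3_one)
    have "midpoint (A, H) ((\<lambda>(A, H). (?R ** A, ?R ** H)) (A, H)) \<in> interior U"
      using that rotation_matrix_diag3[OF that(2-5)] involution
      by (intro midpoint_in_interior_of_invariant_convex[OF \<open>convex U\<close> linear_left_mult_pair])
         (auto intro: invariant)
    then show ?thesis
      by (simp only: midpoint_Pair midpoint_diag3_mult case_prod_conv)
  qed
  from halve[OF assms(3), of 1 "-1" "-1"]
  have "(diag3 1 0 0 ** A, diag3 1 0 0 ** H) \<in> interior U"
    by simp
  from halve[OF this, of "-1" 1 "-1"] show ?thesis
    by (simp add: matrix_mul_assoc diag3_mult diag3_zero zero_prod_def)
qed

lemma degenerate_diag3_in_neighbourhood_of_zero:
  fixes U :: "((real^3^3) \<times> (real^3^3)) set"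
  assumes "0 \<in> interior U"
  obtains s where "s > 0" "(diag3 s s 0, cof (diag3 s s 0)) \<in> U"
proof -
  have "((\<lambda>s. s *\<^sub>R (diag3 1 1 0, 0) + (s * s) *\<^sub>R (0, diag3 0 0 1)) \<longlongrightarrow>
          0 *\<^sub>R (diag3 1 1 0, 0) + (0 * 0) *\<^sub>R (0, diag3 0 0 1)) (at_right 0)"
    by (intro tendsto_intros)
  then have "((\<lambda>s. (diag3 s s 0, cof (diag3 s s 0))) \<longlongrightarrow> 0) (at_right (0::real))"
    by (simp add: cof_diag3 diag3_scaleR diag3_zero zero_prod_def)
  then have "eventually (\<lambda>s. (diag3 s s 0, cof (diag3 s s 0)) \<in> U) (at_right 0)"
    using topological_tendstoD[OF _ open_interior assms] interior_subset
    by (blast intro: eventually_mono)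
  then have "eventually (\<lambda>s. s > 0 \<and> (diag3 s s 0, cof (diag3 s s 0)) \<in> U) (at_right 0)"
    by (intro eventually_conj eventually_at_right_less)
  then show ?thesis
    using that eventually_happens'[OF trivial_limit_at_right_real] by blast
qed

lemma blowup_along_diag3:
  fixes \<psi> :: "real^3^3 \<Rightarrow> ereal"
  assumes coercive: "\<And>Aj. (\<forall>j. det (Aj j) > 0) \<Longrightarrow> (\<lambda>j. det (Aj j)) \<longlonglongrightarrow> 0 \<Longrightarrow>
                       (\<lambda>j. \<psi> (Aj j)) \<longlonglongrightarrow> \<infinity>"
    and "s \<noteq> 0" "M < \<infinity>"
  obtains t where "0 < t" "t < 1" "M < \<psi> (diag3 s s t)"
proof -
  define t :: "nat \<Rightarrow> real" where "t j = inverse (real (Suc j)) / 2" for j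
  have t_bounds: "0 < t j" "t j < 1" for j
  proof -
    have "inverse (real (Suc j)) \<le> 1"
      by (simp add: inverse_le_1_iff)
    then show "0 < t j" "t j < 1"
      unfolding t_def by auto
  qed
  have "(\<lambda>j. s * s * t j) \<longlonglongrightarrow> s * s * (0 / 2)"
    unfolding t_def by (intro tendsto_mult_left tendsto_divide LIMSEQ_inverse_real_of_nat tendsto_const) auto
  then have "(\<lambda>j. \<psi> (diag3 s s (t j))) \<longlonglongrightarrow> \<infinity>"
    using t_bounds \<open>s \<noteq> 0\<close> by (intro coercive) (auto simp: det_diag3 zero_less_mult_iff)
  then have "eventually (\<lambda>j. M < \<psi> (diag3 s s (t j))) sequentially"
    using \<open>M < \<infinity>\<close> by (rule order_tendstoD)
  then show ?thesis
    using that t_bounds eventually_happens'[OF sequentially_bot] by blast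
qed

theorem mainTheorem17:
  fixes g :: "(real^3^3) \<times> (real^3^3) \<times> real \<Rightarrow> ereal"
  assumes conv: "convex_ereal_on (UNIV \<times> UNIV \<times> {0..}) g"
    and finite_pos: "\<And>A H \<delta>. \<delta> > 0 \<Longrightarrow> \<bar>g (A, H, \<delta>)\<bar> \<noteq> \<infinity>"
    and frame: "\<And>R A H \<delta>. rotation_matrix R \<Longrightarrow> \<delta> \<ge> 0 \<Longrightarrow>
                  g (R ** A, R ** H, \<delta>) = g (A, H, \<delta>)"
    and coercive: "\<And>Aj :: nat \<Rightarrow> real^3^3. (\<forall>j. det (Aj j) > 0) \<Longrightarrow>
                  (\<lambda>j. det (Aj j)) \<longlonglongrightarrow> 0 \<Longrightarrow>
                  ((\<lambda>j. g (Aj j, cof (Aj j), det (Aj j))) \<longlongrightarrow> \<infinity>) sequentially"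
  shows "interior {(A, H). g (A, H, 0) < \<infinity>} = {}"
proof (rule ccontr)
  let ?U = "{(A, H). g (A, H, 0) < \<infinity>}"
  assume "interior ?U \<noteq> {}"
  then obtain A H where "(A, H) \<in> interior ?U"
    by auto
  moreover have "(R ** A, R ** H) \<in> ?U" if "rotation_matrix R" "(A, H) \<in> ?U" for R A H
    using that frame[where \<delta> = 0] by simp
  ultimately have "0 \<in> interior ?U"
    by (intro zero_in_interior_of_rotation_invariant[OF convex_ereal_on_finite_zero_slice[OF conv]])
  then obtain s where "s > 0" and degenerate: "(diag3 s s 0, cof (diag3 s s 0)) \<in> ?U"
    by (rule degenerate_diag3_in_neighbourhood_of_zero)
  let ?M = "max (g (diag3 s s 0, cof (diag3 s s 0), 0)) (g (diag3 s s 1, cof (diag3 s s 1), s * s))"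
  have "g (diag3 s s 1, cof (diag3 s s 1), s * s) \<noteq> \<infinity>"
    using finite_pos[of "s * s" "diag3 s s 1" "cof (diag3 s s 1)"] \<open>s > 0\<close> by auto
  with degenerate have finite_ends: "?M < \<infinity>"
    by (simp add: max_def)
  obtain t where "0 < t" "t < 1"
    and "?M < g (diag3 s s t, cof (diag3 s s t), det (diag3 s s t))"
  proof (rule blowup_along_diag3[where \<psi> = "\<lambda>A. g (A, cof A, det A)", OF coercive _ finite_ends])
    show "s \<noteq> 0"
      using \<open>s > 0\<close> by simp
  qed
  moreover have "g (diag3 s s t, cof (diag3 s s t), det (diag3 s s t)) \<le> ?M"
    using \<open>0 < t\<close> \<open>t < 1\<close> by (intro convex_ereal_on_diag3_segment_le_max[OF conv]) auto
  ultimately show False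
    by (meson leD)
qed

end
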